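(* The topological stable rank of the topological ring $s'(\mathbb{Z}^d)$ (for any $d\ge1$), equipped with its weak-$*$ topology as the dual of $s(\mathbb{Z}^d)$, is $1$; that is, the set of invertible elements of $s'(\mathbb{Z}^d)$ is dense in $s'(\mathbb{Z}^d)$.
   Context: For $\mathbf{n}\in\mathbb{Z}^d$, $\|\mathbf{n}\|_1$ denotes the $1$-norm. $s'(\mathbb{Z}^d)$ is the set of all maps $\mathbf{a}:\mathbb{Z}^d\to\mathbb{C}$ for which there exist $M>0$ and $k\in\mathbb{N}$ with $|\mathbf{a}(\mathbf{n})|\le M(1+\|\mathbf{n}\|_1)^k$ for all $\mathbf{n}$; it is a commutative unital ring under pointwise operations. $s(\mathbb{Z}^d)$ is the space of maps $\mathbf{b}:\mathbb{Z}^d\to\mathbb{C}$ with $\sup_{\mathbf{n}}(1+\|\mathbf{n}\|_1)^k|\mathbf{b}(\mathbf{n})|<\infty$ for every $k\in\mathbb{N}$. The pairing $\langle \mathbf{a},\mathbf{b}\rangle=\sum_{\mathbf{n}\in\mathbb{Z}^d}\mathbf{a}(\mathbf{n})\mathbf{b}(\mathbf{n})$ for $\mathbf{a}\in s'(\mathbb{Z}^d)$, $\mathbf{b}\in s(\mathbb{Z}^d)$ defines the weak-$*$ topology on $s'(\mathbb{Z}^d)$: a net $(\mathbf{a}_i)$ converges to $\mathbf{a}$ iff $\langle\mathbf{a}_i,\mathbf{b}\rangle\to\langle\mathbf{a},\mathbf{b}\rangle$ for every $\mathbf{b}\in s(\mathbb{Z}^d)$. For a commutative unital topological ring $R$, $U_N(R)$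 is the set of $(a_1,\dots,a_N)\in R^N$ for which there exist $b_i\in R$ with $\sum b_ia_i=1$, and the topological stable rank of $R$ is the least integer $N\ge1$ such that $U_N(R)$ is dense in $R^N$ (product topology), or $\infty$ if there is none. *)

theory Defs
  imports "HOL-Analysis.Analysis" "HOL-Library.Extended_Nat"
begin

text \<open>The lattice Z^d is modelled as functions 'd \<Rightarrow> int for a finite index type 'd
  (so d = CARD('d) \<ge> 1 is arbitrary).\<close>

definition norm1 :: "('d::finite \<Rightarrow> int) \<Rightarrow> real" where
  "norm1 n = (\<Sum>i\<in>UNIV. real_of_int \<bar>n i\<bar>)"

definition s_dual :: "(('d::finite \<Rightarrow> int) \<Rightarrow> complex) set" where
  "s_dual = {a. \<exists>M>0. \<exists>k::nat. \<forall>n. cmod (a n) \<le> M * (1 + norm1 n) ^ k}"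

definition s_space :: "(('d::finite \<Rightarrow> int) \<Rightarrow> complex) set" where
  "s_space = {b. \<forall>k::nat. bounded (range (\<lambda>n. (1 + norm1 n) ^ k * cmod (b n)))}"

definition pairing :: "(('d::finite \<Rightarrow> int) \<Rightarrow> complex) \<Rightarrow> (('d \<Rightarrow> int) \<Rightarrow> complex) \<Rightarrow> complex" where
  "pairing a b = infsum (\<lambda>n. a n * b n) UNIV"

definition weak_star :: "(('d::finite \<Rightarrow> int) \<Rightarrow> complex) topology" where
  "weak_star = topology_generated_by
     {{a \<in> s_dual. pairing a b \<in> U} | b U. b \<in> s_space \<and> open U}"

definition U_tuples :: "nat \<Rightarrow> (nat \<Rightarrow> ('d::finite \<Rightarrow> int) \<Rightarrow> complex) set" where
  "U_tuples N = {a \<in> PiE {..<N} (\<lambda>_. s_dual).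
      \<exists>b \<in> PiE {..<N} (\<lambda>_. s_dual). (\<lambda>n. \<Sum>i<N. b i n * a i n) = (\<lambda>_. 1)}"

definition dense_in_power :: "nat \<Rightarrow> 'd::finite itself \<Rightarrow> bool" where
  "dense_in_power N _ \<longleftrightarrow>
     (product_topology (\<lambda>_. (weak_star :: (('d \<Rightarrow> int) \<Rightarrow> complex) topology)) {..<N})
        closure_of (U_tuples N :: (nat \<Rightarrow> ('d \<Rightarrow> int) \<Rightarrow> complex) set)
     = topspace (product_topology (\<lambda>_. (weak_star :: (('d \<Rightarrow> int) \<Rightarrow> complex) topology)) {..<N})"

definition tsr_s_dual :: "'d::finite itself \<Rightarrow> enat" where
  "tsr_s_dual d = (if \<exists>N\<ge>1. dense_in_power N d
                   then enat (LEAST N. N \<ge> 1 \<and> dense_in_power N d) else \<infinity>)"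

end

theory Submission
  imports Defs
begin

text \<open>
  Given \<open>a \<in> s'\<close> and \<open>\<epsilon> > 0\<close>, replace every value of modulus below \<open>\<epsilon>\<close> by \<open>\<epsilon>\<close>. The result
  is still polynomially bounded, and its values are bounded away from \<open>0\<close>, so it is a unit of
  \<open>s'\<close>. It differs from \<open>a\<close> by at most \<open>2\<epsilon>\<close> pointwise, and since every \<open>b \<in> s\<close> is absolutely
  summable, the pairings with \<open>b\<close> converge as \<open>\<epsilon> \<rightarrow> 0\<close>.
\<close>

lemma norm1_nonneg: "norm1 n \<ge> 0"
  by (simp add: norm1_def sum_nonneg)

lemma summable_on_inverse_square_int:
  "(\<lambda>z::int. inverse ((1 + real_of_int \<bar>z\<bar>) ^ 2)) summable_on UNIV"
proof -
  let ?g = "\<lambda>z::int. inverse ((1 + real_of_int \<bar>z\<bar>) ^ 2)"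
  have "summable (\<lambda>n. inverse (real n ^ 2))"
    by (rule inverse_power_summable) simp
  then have "summable (\<lambda>n. inverse ((1 + real n) ^ 2))"
    using summable_Suc_iff[of "\<lambda>n. inverse (real n ^ 2)"] by (simp add: add.commute)
  then have h: "(\<lambda>n. inverse ((1 + real n) ^ 2)) summable_on UNIV"
    by (intro summable_nonneg_imp_summable_on) auto
  have pos: "?g summable_on range int"
    using h by (subst summable_on_reindex) (auto simp: o_def)
  have neg: "?g summable_on range (\<lambda>n. - int n)"
    using h by (subst summable_on_reindex) (auto simp: o_def inj_on_def)
  have "z \<in> range int \<union> range (\<lambda>n. - int n)" for z :: int
    by (cases "z \<ge> 0") (auto intro: image_eqI[of _ _ "nat z"] image_eqI[of _ _ "nat (- z)"])
  then have "(UNIV :: int set) = range int \<union> range (\<lambda>n. - int n)"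
    by blast
  then show ?thesis
    using summable_on_union[OF pos neg] by simp
qed

text \<open>The exponent \<open>2d\<close> makes the weight dominated by \<open>\<Prod>\<^sub>i (1 + \<bar>n\<^sub>i\<bar>)\<^sup>-\<^sup>2\<close>, a product of
  summable one-dimensional weights.\<close>

lemma summable_on_inverse_norm1_power:
  "(\<lambda>n::'d::finite \<Rightarrow> int. inverse ((1 + norm1 n) ^ (2 * CARD('d)))) summable_on UNIV"
proof -
  let ?w = "\<lambda>n::'d \<Rightarrow> int. \<Prod>i\<in>UNIV. inverse ((1 + real_of_int \<bar>n i\<bar>) ^ 2)"
  have "Infinite_Set_Sum.abs_summable_on ?w (PiE UNIV (\<lambda>_. UNIV))"
    using summable_on_inverse_square_int
    by (intro abs_summable_on_prod_PiE) (auto simp: abs_summable_equivalent[symmetric])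
  then have w: "?w summable_on UNIV"
    using abs_summable_equivalent[of ?w UNIV] by (simp add: PiE_UNIV abs_summable_summable)
  show ?thesis
  proof (rule summable_on_comparison_test[OF w])
    fix n :: "'d \<Rightarrow> int"
    have coord: "real_of_int \<bar>n i\<bar> \<le> norm1 n" for i
      unfolding norm1_def by (rule member_le_sum) auto
    have "(\<Prod>i\<in>UNIV. (1 + real_of_int \<bar>n i\<bar>) ^ 2) \<le> (\<Prod>i\<in>(UNIV::'d set). (1 + norm1 n) ^ 2)"
      using coord by (intro prod_mono conjI power_mono) auto
    also have "\<dots> = (1 + norm1 n) ^ (2 * CARD('d))"
      by (simp add: power_mult)
    finally have le: "(\<Prod>i\<in>UNIV. (1 + real_of_int \<bar>n i\<bar>) ^ 2) \<le> (1 + norm1 n) ^ (2 * CARD('d))" .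
    have "?w n = inverse (\<Prod>i\<in>UNIV. (1 + real_of_int \<bar>n i\<bar>) ^ 2)"
      using prod_inversef[of "\<lambda>i. (1 + real_of_int \<bar>n i\<bar>) ^ 2" UNIV] by (simp add: o_def)
    then show "inverse ((1 + norm1 n) ^ (2 * CARD('d))) \<le> ?w n"
      using le by (simp add: le_imp_inverse_le prod_pos)
  qed (simp add: norm1_nonneg)
qed

lemma s_dualE:
  assumes "a \<in> s_dual"
  obtains M k where "M > 0" "\<And>n. cmod (a n) \<le> M * (1 + norm1 n) ^ k"
  using assms unfolding s_dual_def by blast

lemma s_spaceE:
  assumes "b \<in> s_space"
  obtains C where "\<And>n. (1 + norm1 n) ^ k * cmod (b n) \<le> C"
proof -
  obtain C where C: "\<And>n. norm ((1 + norm1 n) ^ k * cmod (b n)) \<le> C"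
    using assms unfolding s_space_def bounded_iff by blast
  have "(1 + norm1 n) ^ k * cmod (b n) \<le> C" for n
    using abs_ge_self[of "(1 + norm1 n) ^ k * cmod (b n)"] C[of n] by simp
  then show ?thesis
    by (rule that)
qed

lemma s_space_abs_summable:
  assumes "b \<in> s_space"
  shows "Infinite_Sum.abs_summable_on (b :: ('d::finite \<Rightarrow> int) \<Rightarrow> complex) UNIV"
proof -
  let ?K = "2 * CARD('d)"
  obtain C where C: "\<And>n. (1 + norm1 n) ^ ?K * cmod (b n) \<le> C"
    using s_spaceE[OF assms] by blast
  show ?thesis
  proof (rule Infinite_Sum.abs_summable_on_comparison_test')
    show "(\<lambda>n::'d \<Rightarrow> int. C * inverse ((1 + norm1 n) ^ ?K)) summable_on UNIV"
      by (intro summable_on_cmult_right summable_on_inverse_norm1_power)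
    fix n :: "'d \<Rightarrow> int"
    have "(1 + norm1 n) ^ ?K > 0"
      using norm1_nonneg[of n] by simp
    then show "norm (b n) \<le> C * inverse ((1 + norm1 n) ^ ?K)"
      using C[of n] by (simp add: field_simps)
  qed
qed

lemma mult_s_dual_s_space:
  assumes "a \<in> s_dual" "b \<in> s_space"
  shows "(\<lambda>n. a n * b n) \<in> s_space"
  unfolding s_space_def
proof (intro CollectI allI)
  fix k :: nat
  obtain M j where M: "M > 0" "\<And>n. cmod (a n) \<le> M * (1 + norm1 n) ^ j"
    using s_dualE[OF assms(1)] by blast
  obtain C where C: "\<And>n. (1 + norm1 n) ^ (k + j) * cmod (b n) \<le> C"
    using s_spaceE[OF assms(2)] by blast
  have "\<bar>(1 + norm1 n) ^ k * cmod (a n * b n)\<bar> \<le> M * C" for n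
  proof -
    have X: "(1 + norm1 n) ^ k \<ge> 0"
      using norm1_nonneg[of n] by simp
    have "\<bar>(1 + norm1 n) ^ k * cmod (a n * b n)\<bar> = (1 + norm1 n) ^ k * cmod (a n) * cmod (b n)"
      using X by (simp add: norm_mult)
    also have "\<dots> \<le> (1 + norm1 n) ^ k * (M * (1 + norm1 n) ^ j) * cmod (b n)"
      using M(2)[of n] X by (intro mult_right_mono mult_left_mono) auto
    also have "\<dots> = M * ((1 + norm1 n) ^ (k + j) * cmod (b n))"
      by (simp add: power_add mult_ac)
    also have "\<dots> \<le> M * C"
      using C[of n] M(1) by simp
    finally show ?thesis .
  qed
  then show "bounded (range (\<lambda>n. (1 + norm1 n) ^ k * cmod (a n * b n)))"
    by (auto simp: bounded_iff)
qed

definition unit_approx :: "real \<Rightarrow> ('n \<Rightarrow> complex) \<Rightarrow> 'n \<Rightarrow> complex" where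
  "unit_approx \<epsilon> a n = (if \<epsilon> \<le> cmod (a n) then a n else complex_of_real \<epsilon>)"

lemma norm_unit_approx_ge: "\<epsilon> \<ge> 0 \<Longrightarrow> cmod (unit_approx \<epsilon> a n) \<ge> \<epsilon>"
  by (simp add: unit_approx_def)

lemma unit_approx_nonzero: "\<epsilon> > 0 \<Longrightarrow> unit_approx \<epsilon> a n \<noteq> 0"
  using norm_unit_approx_ge[of \<epsilon> a n] by auto

lemma norm_unit_approx_le: "\<epsilon> \<ge> 0 \<Longrightarrow> cmod (unit_approx \<epsilon> a n) \<le> cmod (a n) + \<epsilon>"
  by (simp add: unit_approx_def)

lemma norm_unit_approx_diff: "\<epsilon> \<ge> 0 \<Longrightarrow> cmod (unit_approx \<epsilon> a n - a n) \<le> 2 * \<epsilon>"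
  using norm_triangle_ineq4[of "complex_of_real \<epsilon>" "a n"]
  by (auto simp: unit_approx_def)

lemma unit_approx_in_s_dual:
  assumes "a \<in> s_dual" "\<epsilon> \<ge> 0"
  shows "unit_approx \<epsilon> a \<in> s_dual"
proof -
  obtain M k where M: "M > 0" "\<And>n. cmod (a n) \<le> M * (1 + norm1 n) ^ k"
    using s_dualE[OF assms(1)] by blast
  have "cmod (unit_approx \<epsilon> a n) \<le> (M + \<epsilon>) * (1 + norm1 n) ^ k" for n
  proof -
    have "(1 + norm1 n) ^ k \<ge> 1"
      using norm1_nonneg[of n] by simp
    then have "\<epsilon> \<le> \<epsilon> * (1 + norm1 n) ^ k"
      using assms(2) mult_left_mono[of 1 _ \<epsilon>] by simp
    then show ?thesis
      using norm_unit_approx_le[OF assms(2), of a n] M(2)[of n] by (simp add: distrib_right)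
  qed
  then show ?thesis
    unfolding s_dual_def using M(1) assms(2) by (auto intro!: exI[of _ "M + \<epsilon>"])
qed

lemma inverse_unit_approx_in_s_dual:
  assumes "\<epsilon> > 0"
  shows "(\<lambda>n. inverse (unit_approx \<epsilon> a n)) \<in> s_dual"
proof -
  have "cmod (inverse (unit_approx \<epsilon> a n)) \<le> inverse \<epsilon> * (1 + norm1 n) ^ 0" for n
    using norm_unit_approx_ge[of \<epsilon> a n] assms by (simp add: norm_inverse le_imp_inverse_le)
  then show ?thesis
    unfolding s_dual_def using assms by (intro CollectI exI[of _ "inverse \<epsilon>"] exI[of _ 0] conjI) auto
qed

lemma pairing_unit_approx_tendsto:
  fixes a b :: "('d::finite \<Rightarrow> int) \<Rightarrow> complex"
  assumes a: "a \<in> s_dual" and b: "b \<in> s_space"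
  shows "((\<lambda>\<epsilon>. pairing (unit_approx \<epsilon> a) b) \<longlongrightarrow> pairing a b) (at_right 0)"
proof -
  define S where "S = infsum (\<lambda>n. norm (b n)) UNIV"
  have b1: "Infinite_Sum.abs_summable_on b UNIV"
    by (rule s_space_abs_summable[OF b])
  have bound: "norm (pairing (unit_approx \<epsilon> a) b - pairing a b) \<le> 2 * \<epsilon> * S" if "\<epsilon> > 0" for \<epsilon>
  proof -
    let ?d = "\<lambda>n. (unit_approx \<epsilon> a n - a n) * b n"
    have pt: "norm (?d n) \<le> 2 * \<epsilon> * norm (b n)" for n
      using norm_unit_approx_diff[of \<epsilon> a n] that by (simp add: norm_mult mult_right_mono)
    have d: "Infinite_Sum.abs_summable_on ?d UNIV"
      by (rule Infinite_Sum.abs_summable_on_comparison_test'[OF summable_on_cmult_right[OF b1]])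
        (use pt in simp)
    have "pairing (unit_approx \<epsilon> a) b = infsum (\<lambda>n. ?d n + a n * b n) UNIV"
      unfolding pairing_def by (simp add: algebra_simps)
    also have "\<dots> = infsum ?d UNIV + pairing a b"
      unfolding pairing_def
      using abs_summable_summable[OF d]
        abs_summable_summable[OF s_space_abs_summable[OF mult_s_dual_s_space[OF a b]]]
      by (rule infsum_add)
    finally have "norm (pairing (unit_approx \<epsilon> a) b - pairing a b) = norm (infsum ?d UNIV)"
      by simp
    also have "\<dots> \<le> infsum (\<lambda>n. norm (?d n)) UNIV"
      by (rule norm_infsum_bound[OF d])
    also have "\<dots> \<le> infsum (\<lambda>n. 2 * \<epsilon> * norm (b n)) UNIV"
      using d summable_on_cmult_right[OF b1] pt by (intro Infinite_Sum.infsum_mono) auto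
    also have "\<dots> = 2 * \<epsilon> * S"
      unfolding S_def by (simp add: infsum_cmult_right')
    finally show ?thesis .
  qed
  have "((\<lambda>\<epsilon>. 2 * \<epsilon> * S) \<longlongrightarrow> 0) (at_right 0)"
    by (intro tendsto_eq_intros) auto
  then have "((\<lambda>\<epsilon>. pairing (unit_approx \<epsilon> a) b - pairing a b) \<longlongrightarrow> 0) (at_right 0)"
    by (rule Lim_null_comparison[rotated])
      (use eventually_at_right_less[of "0::real"] in \<open>auto elim!: eventually_mono intro: bound\<close>)
  then show ?thesis
    by (rule LIM_zero_cancel)
qed

lemma limitin_topology_generated_by:
  assumes "l \<in> \<Union>\<S>" and "\<And>U. U \<in> \<S> \<Longrightarrow> l \<in> U \<Longrightarrow> eventually (\<lambda>x. f x \<in> U) F"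
  shows "limitin (topology_generated_by \<S>) f l F"
proof -
  have "l \<in> U \<longrightarrow> eventually (\<lambda>x. f x \<in> U) F" if "generate_topology_on \<S> U" for U
    using that
  proof (induction rule: generate_topology_on.induct)
    case (Int U V)
    then show ?case by (auto simp: eventually_conj_iff)
  next
    case (UN K)
    show ?case
    proof
      assume "l \<in> \<Union>K"
      then obtain V where V: "V \<in> K" "l \<in> V"
        by blast
      then have "eventually (\<lambda>x. f x \<in> V) F"
        using UN.IH by blast
      then show "eventually (\<lambda>x. f x \<in> \<Union>K) F"
        using V(1) by (auto elim: eventually_mono)
    qed
  qed (use assms(2) in auto)
  then show ?thesis
    using assms(1) by (simp add: limitin_def openin_topology_generated_by_iff)
qed

lemma topspace_weak_star: "topspace weak_star = s_dual"
proof -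
  have "(\<lambda>_. 0) \<in> s_space"
    by (simp add: s_space_def)
  then show ?thesis
    unfolding weak_star_def topology_generated_by_topspace by blast
qed

lemma limitin_weak_star:
  assumes "a \<in> s_dual" and "eventually (\<lambda>x. f x \<in> s_dual) F"
    and "\<And>b. b \<in> s_space \<Longrightarrow> ((\<lambda>x. pairing (f x) b) \<longlongrightarrow> pairing a b) F"
  shows "limitin weak_star f a F"
  unfolding weak_star_def
proof (rule limitin_topology_generated_by)
  show "a \<in> \<Union> {{a \<in> s_dual. pairing a b \<in> U} | b U. b \<in> s_space \<and> open U}"
    using assms(1) topspace_weak_star[unfolded weak_star_def topology_generated_by_topspace]
    by blast
next
  fix V assume "V \<in> {{a \<in> s_dual. pairing a b \<in> U} | b U. b \<in> s_space \<and> open U}" "a \<in> V"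
  then obtain b U where V: "V = {a \<in> s_dual. pairing a b \<in> U}"
    and "b \<in> s_space" "open U" "pairing a b \<in> U"
    by blast
  then have "eventually (\<lambda>x. pairing (f x) b \<in> U) F"
    using assms(3) topological_tendstoD by blast
  with assms(2) have "eventually (\<lambda>x. f x \<in> s_dual \<and> pairing (f x) b \<in> U) F"
    by (rule eventually_conj)
  then show "eventually (\<lambda>x. f x \<in> V) F"
    unfolding V by (rule eventually_mono) simp
qed

lemma limitin_weak_star_unit_approx:
  assumes "a \<in> s_dual"
  shows "limitin weak_star (\<lambda>\<epsilon>. unit_approx \<epsilon> a) a (at_right 0)"
proof (rule limitin_weak_star[OF assms])
  show "\<forall>\<^sub>F \<epsilon> in at_right 0. unit_approx \<epsilon> a \<in> s_dual"
    using eventually_at_right_less[of "0::real"]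
    by (rule eventually_mono) (simp add: unit_approx_in_s_dual assms)
qed (rule pairing_unit_approx_tendsto[OF assms])

lemma limitin_in_closure_of:
  assumes "limitin X f l F" "eventually (\<lambda>x. f x \<in> S) F" "F \<noteq> bot"
  shows "l \<in> X closure_of S"
  unfolding in_closure_of
proof (intro conjI allI impI)
  show "l \<in> topspace X"
    using assms(1) by (rule limitin_topspace)
  fix T assume "l \<in> T \<and> openin X T"
  then have "eventually (\<lambda>x. f x \<in> S \<and> f x \<in> T) F"
    using assms by (auto intro: eventually_conj limitinD)
  then show "\<exists>y. y \<in> S \<and> y \<in> T"
    using eventually_happens'[OF assms(3)] by blast
qed

lemma restrict_in_U_tuples_1:
  assumes "a \<in> s_dual" "(\<lambda>n. inverse (a n)) \<in> s_dual" "\<And>n. a n \<noteq> 0"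
  shows "restrict (\<lambda>_. a) {..<1} \<in> U_tuples 1"
  unfolding U_tuples_def
proof (intro CollectI conjI bexI)
  show "restrict (\<lambda>_. a) {..<1} \<in> PiE {..<1} (\<lambda>_. s_dual)"
    using assms(1) by simp
  show "restrict (\<lambda>_ n. inverse (a n)) {..<1} \<in> PiE {..<1} (\<lambda>_. s_dual)"
    using assms(2) by simp
  show "(\<lambda>n. \<Sum>i<1::nat. restrict (\<lambda>_ n. inverse (a n)) {..<1} i n * restrict (\<lambda>_. a) {..<1} i n)
      = (\<lambda>_. 1)"
    using assms(3) by simp
qed

lemma dense_in_power_1: "dense_in_power 1 TYPE('d::finite)"
  unfolding dense_in_power_def
proof (rule antisym[OF closure_of_subset_topspace subsetI])
  let ?X = "product_topology (\<lambda>_. weak_star :: (('d \<Rightarrow> int) \<Rightarrow> complex) topology) {..<1::nat}"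
  fix x assume "x \<in> topspace ?X"
  then have x: "x \<in> PiE {..<1} (\<lambda>_. s_dual)"
    by (simp add: topspace_weak_star)
  then have a: "x 0 \<in> s_dual"
    by auto
  define f where "f \<epsilon> = restrict (\<lambda>_. unit_approx \<epsilon> (x 0)) {..<1::nat}" for \<epsilon>
  have pos: "\<forall>\<^sub>F \<epsilon> in at_right 0. \<epsilon> > (0::real)"
    by (rule eventually_at_right_less)
  have unit: "\<forall>\<^sub>F \<epsilon> in at_right 0. f \<epsilon> \<in> U_tuples 1"
    using pos
  proof (rule eventually_mono)
    fix \<epsilon> :: real assume "\<epsilon> > 0"
    then show "f \<epsilon> \<in> U_tuples 1"
      unfolding f_def
      by (intro restrict_in_U_tuples_1 unit_approx_in_s_dual inverse_unit_approx_in_s_dual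
          unit_approx_nonzero a) simp_all
  qed
  have "limitin weak_star (\<lambda>\<epsilon>. unit_approx \<epsilon> (x 0)) (x 0) (at_right 0)"
    using a by (rule limitin_weak_star_unit_approx)
  moreover have "\<forall>\<^sub>F \<epsilon> in at_right 0. f \<epsilon> \<in> topspace ?X"
    using pos by (rule eventually_mono) (simp add: topspace_weak_star f_def unit_approx_in_s_dual a)
  moreover have "x \<in> extensional {..<1}"
    using x by (simp add: PiE_iff)
  ultimately have "limitin ?X f x (at_right 0)"
    unfolding limitin_componentwise by (simp add: f_def lessThan_Suc)
  then show "x \<in> ?X closure_of U_tuples 1"
    using unit by (rule limitin_in_closure_of) simp
qed

theorem theorem1p8:
  shows "tsr_s_dual TYPE('d::finite) = 1"
proof -
  have "(LEAST N. N \<ge> 1 \<and> dense_in_power N TYPE('d)) = 1"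
    using dense_in_power_1 by (intro Least_equality) auto
  then show ?thesis
    using dense_in_power_1 unfolding tsr_s_dual_def by (auto simp: one_enat_def)
qed

end
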